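(* Let $A[1..n]$ be an array with entries from an alphabet $\Sigma$. One can construct a data structure occupying $O(n\lg|\Sigma|)$ bits that answers in constant time the query $\mathrm{rank}(k)$ = the number of indices $i\le k$ with $A[i]=A[k]$, for any $1\le k\le n$.
   Context: Model: word RAM with words of $\Theta(\lg n)$ bits (at least $\lg n$ bits), unit-cost word operations. *)

theory Defs
  imports Complex_Main
begin

text \<open>The data structure is a read-only memory,
  a list of w-bit words; its space in bits is (number of words) * w.\<close>

datatype instr =
    IConst nat nat
  | IAdd nat nat nat
  | ISub nat nat nat
  | IMul nat nat nat
  | IDiv nat nat nat
  | IMod nat nat nat
  | IShl nat nat nat
  | IShr nat nat nat
  | IAnd nat nat nat
  | IOr nat nat nat
  | IXor nat nat nat
  | ILess nat nat nat
  | ILoad nat nat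
  | IJz nat nat
  | IHalt

type_synonym state = "nat \<times> (nat \<Rightarrow> nat)"

definition wrap :: "nat \<Rightarrow> int \<Rightarrow> nat" where
  "wrap w x = nat (x mod 2 ^ w)"

fun exec_instr :: "nat \<Rightarrow> nat list \<Rightarrow> instr \<Rightarrow> state \<Rightarrow> state" where
  "exec_instr w m (IConst r v) (pc, R) = (pc + 1, R(r := v mod 2 ^ w))"
| "exec_instr w m (IAdd r a b) (pc, R) = (pc + 1, R(r := (R a + R b) mod 2 ^ w))"
| "exec_instr w m (ISub r a b) (pc, R) = (pc + 1, R(r := wrap w (int (R a) - int (R b))))"
| "exec_instr w m (IMul r a b) (pc, R) = (pc + 1, R(r := (R a * R b) mod 2 ^ w))"
| "exec_instr w m (IDiv r a b) (pc, R) = (pc + 1, R(r := R a div R b))"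
| "exec_instr w m (IMod r a b) (pc, R) = (pc + 1, R(r := R a mod R b))"
| "exec_instr w m (IShl r a b) (pc, R) = (pc + 1, R(r := (R a * 2 ^ R b) mod 2 ^ w))"
| "exec_instr w m (IShr r a b) (pc, R) = (pc + 1, R(r := R a div 2 ^ R b))"
| "exec_instr w m (IAnd r a b) (pc, R) = (pc + 1, R(r := and (R a) (R b)))"
| "exec_instr w m (IOr r a b) (pc, R) = (pc + 1, R(r := or (R a) (R b)))"
| "exec_instr w m (IXor r a b) (pc, R) = (pc + 1, R(r := xor (R a) (R b)))"
| "exec_instr w m (ILess r a b) (pc, R) = (pc + 1, R(r := (if R a < R b then 1 else 0)))"
| "exec_instr w m (ILoad r a) (pc, R) = (pc + 1, R(r := (if R a < length m then m ! R a else 0)))"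
| "exec_instr w m (IJz r t) (pc, R) = ((if R r = 0 then t else pc + 1), R)"
| "exec_instr w m IHalt s = s"

definition halted :: "instr list \<Rightarrow> state \<Rightarrow> bool" where
  "halted P s \<longleftrightarrow> fst s < length P \<and> P ! fst s = IHalt"

definition step :: "nat \<Rightarrow> nat list \<Rightarrow> instr list \<Rightarrow> state \<Rightarrow> state" where
  "step w m P s = (if fst s < length P then exec_instr w m (P ! fst s) s else s)"

definition run :: "nat \<Rightarrow> nat list \<Rightarrow> instr list \<Rightarrow> nat \<Rightarrow> state \<Rightarrow> state" where
  "run w m P t s = (step w m P ^^ t) s"

definition answers_within :: "nat \<Rightarrow> nat list \<Rightarrow> instr list \<Rightarrow> nat \<Rightarrow> nat \<Rightarrow> nat \<Rightarrow> bool" where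
  "answers_within w m P c x y \<longleftrightarrow>
     (\<exists>t\<le>c. halted P (run w m P t (0, (\<lambda>_. 0)(0 := x)))
            \<and> snd (run w m P t (0, (\<lambda>_. 0)(0 := x))) 0 = y)"

definition arank :: "(nat \<Rightarrow> nat) \<Rightarrow> nat \<Rightarrow> nat" where
  "arank A k = card {i. 1 \<le> i \<and> i \<le> k \<and> A i = A k}"

end

theory Submission
  imports Defs "HOL-Library.Log_Nat"
begin

(* The structure is the classical two-level counting scheme.  The 0-based sequence
   S = A(1..n) is cut into blocks of b symbols (b L <= w, L = max 1 (ceil (lg sigma))),
   and blocks are grouped into superblocks of 2^sup_exp blocks.  The memory holds
   (1) a header of parameters, (2) every block packed into one word (its "code"),
   (3) two tables indexed by (code, position): the rank of the position inside its block
   and the index of its symbol among the distinct symbols of the block, (4) per block,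
   for each of its distinct symbols, the count since the start of the superblock (small
   fields packed into words), and (5) per superblock, for each symbol, the count before it.
   Then rank = superblock count + in-superblock count + in-block rank (rank_split), and a
   fixed program (rank_prog) reads these entries in 58 steps (rank_prog_hierarchical). *)

text \<open>Packing. A list of L-bit fields is stored in one number, least significant
  field first; digit L c u extracts field u, exactly as the query program does with a
  shift and a mask.\<close>

primrec enc :: "nat \<Rightarrow> nat list \<Rightarrow> nat" where
  "enc L [] = 0"
| "enc L (x # xs) = x + 2 ^ L * enc L xs"

definition digit :: "nat \<Rightarrow> nat \<Rightarrow> nat \<Rightarrow> nat" where
  "digit L c u = c div 2 ^ (u * L) mod 2 ^ L"

lemma enc_less:
  assumes "\<forall>x\<in>set xs. x < 2 ^ L"
  shows "enc L xs < 2 ^ (L * length xs)"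
  using assms
proof (induction xs)
  case Nil
  then show ?case by simp
next
  case (Cons x xs)
  then have "enc L xs + 1 \<le> 2 ^ (L * length xs)" and "x < 2 ^ L"
    by auto
  then have "x + 2 ^ L * enc L xs < 2 ^ L * (enc L xs + 1)"
    by simp
  also have "\<dots> \<le> 2 ^ L * 2 ^ (L * length xs)"
    using \<open>enc L xs + 1 \<le> 2 ^ (L * length xs)\<close> by (rule mult_le_mono2)
  finally show ?case
    by (simp add: power_add[symmetric])
qed

lemma digit_enc:
  assumes "\<forall>x\<in>set xs. x < 2 ^ L" and "u < length xs"
  shows "digit L (enc L xs) u = xs ! u"
  using assms
proof (induction xs arbitrary: u)
  case Nil
  then show ?case by simp
next
  case (Cons x xs)
  show ?case
  proof (cases u)
    case 0
    then show ?thesis using Cons.prems by (simp add: digit_def)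
  next
    case (Suc v)
    have "enc L (x # xs) div 2 ^ (u * L) = (x + 2 ^ L * enc L xs) div 2 ^ L div 2 ^ (v * L)"
      by (simp add: Suc power_add div_mult2_eq mult.commute)
    also have "(x + 2 ^ L * enc L xs) div 2 ^ L = enc L xs"
      using Cons.prems(1) by simp
    finally show ?thesis
      using Cons Suc by (simp add: digit_def)
  qed
qed

lemma digit_less: "digit L c u < 2 ^ L"
  by (simp add: digit_def)

text \<open>Row-major tables. tabulate N K F lists F i u for i < N and u < K; entry (i, u)
  sits at index i K + u, which is how the program addresses its lookup tables.\<close>

definition tabulate :: "nat \<Rightarrow> nat \<Rightarrow> (nat \<Rightarrow> nat \<Rightarrow> nat) \<Rightarrow> nat list" where
  "tabulate N K F = concat (map (\<lambda>i. map (F i) [0..<K]) [0..<N])"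

lemma length_tabulate [simp]: "length (tabulate N K F) = N * K"
  unfolding tabulate_def by (induction N) (auto simp: length_concat sum_list_triv)

lemma nth_tabulate:
  assumes "i < N" and "u < K"
  shows "tabulate N K F ! (i * K + u) = F i u"
  using assms
proof (induction N)
  case 0
  then show ?case by simp
next
  case (Suc N)
  have tab_Suc: "tabulate (Suc N) K F = tabulate N K F @ map (F N) [0..<K]"
    by (simp add: tabulate_def)
  show ?case
  proof (cases "i < N")
    case True
    have "i * K + u < Suc i * K" using Suc.prems by simp
    also have "\<dots> \<le> N * K" using True by (intro mult_le_mono1) simp
    finally show ?thesis using Suc True by (simp add: tab_Suc nth_append)
  next
    case False
    then have "i = N" using Suc.prems by simp
    then show ?thesis using Suc.prems by (simp add: tab_Suc nth_append)
  qed
qed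

lemma tabulate_bound:
  assumes "\<And>i u. i < N \<Longrightarrow> u < K \<Longrightarrow> F i u < B"
  shows "\<forall>x\<in>set (tabulate N K F). x < B"
  using assms by (auto simp: tabulate_def)

text \<open>Counting the positions i \<le> p with property P by splitting [0, p] at x \<le> y:
  this is the decomposition of a rank into superblock, block and in-block parts.\<close>

lemma card_prefix_split:
  fixes x y p :: nat
  assumes "x \<le> y" and "y \<le> p"
  shows "card {i. i < x \<and> P i} + card {i. x \<le> i \<and> i < y \<and> P i}
           + card {t. t \<le> p - y \<and> P (y + t)} = card {i. i \<le> p \<and> P i}"
proof -
  have shift: "{i. y \<le> i \<and> i \<le> p \<and> P i} = (\<lambda>t. y + t) ` {t. t \<le> p - y \<and> P (y + t)}"
  proof (rule set_eqI, rule iffI)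
    fix i assume "i \<in> {i. y \<le> i \<and> i \<le> p \<and> P i}"
    then show "i \<in> (\<lambda>t. y + t) ` {t. t \<le> p - y \<and> P (y + t)}"
      by (intro image_eqI[of _ _ "i - y"]) auto
  qed (use assms in auto)
  have "card {t. t \<le> p - y \<and> P (y + t)} = card {i. y \<le> i \<and> i \<le> p \<and> P i}"
    unfolding shift by (rule card_image[symmetric]) (simp add: inj_on_def)
  moreover have "{i. i \<le> p \<and> P i} = {i. i < x \<and> P i} \<union> {i. x \<le> i \<and> i < y \<and> P i}
      \<union> {i. y \<le> i \<and> i \<le> p \<and> P i}"
    using assms by auto
  moreover have "card ({i. i < x \<and> P i} \<union> {i. x \<le> i \<and> i < y \<and> P i}
      \<union> {i. y \<le> i \<and> i \<le> p \<and> P i}) = card {i. i < x \<and> P i}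
      + card {i. x \<le> i \<and> i < y \<and> P i} + card {i. y \<le> i \<and> i \<le> p \<and> P i}"
  proof -
    have "finite {i. i < x \<and> P i}" "finite {i. x \<le> i \<and> i < y \<and> P i}"
      "finite {i. y \<le> i \<and> i \<le> p \<and> P i}"
      by (rule finite_subset[of _ "{..p}"], use assms in auto)+
    moreover have "{i. i < x \<and> P i} \<inter> {i. x \<le> i \<and> i < y \<and> P i} = {}"
      "({i. i < x \<and> P i} \<union> {i. x \<le> i \<and> i < y \<and> P i}) \<inter> {i. y \<le> i \<and> i \<le> p \<and> P i} = {}"
      using assms by auto
    ultimately show ?thesis
      by (simp add: card_Un_disjoint)
  qed
  ultimately show ?thesis
    by simp
qed

text \<open>Per-block counts are stored in the order of the distinct symbols of the
  block, so a symbol is located through its rank among them.\<close>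

definition rank_in :: "nat set \<Rightarrow> nat \<Rightarrow> nat" where
  "rank_in X a = card {y \<in> X. y < a}"

definition nth_least :: "nat set \<Rightarrow> nat \<Rightarrow> nat" where
  "nth_least X u = (THE x. x \<in> X \<and> rank_in X x = u)"

lemma rank_in_strict_mono:
  assumes "finite X" and "x \<in> X" and "x < a"
  shows "rank_in X x < rank_in X a"
proof -
  have "{y \<in> X. y < x} \<subset> {y \<in> X. y < a}"
    using assms(2,3) by auto
  then show ?thesis
    unfolding rank_in_def using assms(1) by (intro psubset_card_mono) auto
qed

lemma nth_least_rank_in:
  assumes "finite X" and "a \<in> X"
  shows "nth_least X (rank_in X a) = a"
  unfolding nth_least_def
proof (rule the_equality)
  fix x assume x: "x \<in> X \<and> rank_in X x = rank_in X a"
  show "x = a"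
  proof (rule ccontr)
    assume "x \<noteq> a"
    then consider "x < a" | "a < x" by linarith
    then show False
      by cases (use rank_in_strict_mono[OF assms(1)] x assms(2) in fastforce)+
  qed
qed (use assms in simp)

lemma rank_in_less_card:
  assumes "finite X" and "a \<in> X"
  shows "rank_in X a < card X"
proof -
  have "{y \<in> X. y < a} \<subset> X"
    using assms(2) by auto
  then show ?thesis
    unfolding rank_in_def using assms(1) by (rule psubset_card_mono[rotated])
qed

text \<open>Executing the machine one step at a time, for symbolic execution of a program.\<close>

lemma run_Suc: "run w m P (Suc t) s = run w m P t (step w m P s)"
  unfolding run_def funpow_Suc_right by simp

lemma run_numeral: "run w m P (numeral t) s = run w m P (pred_numeral t) (step w m P s)"
  by (subst numeral_eq_Suc) (rule run_Suc)

lemma run_0: "run w m P 0 s = s"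
  by (simp add: run_def)

text \<open>The only subtraction of the query computes k - 1 for 1 \<le> k, which does not wrap.\<close>

lemma wrap_pred:
  assumes "1 \<le> k" and "k < 2 ^ w"
  shows "wrap w (int k - 1) = k - 1"
proof -
  have "(int k - 1) mod 2 ^ w = int (k - 1) mod int (2 ^ w)"
    using assms(1) by simp
  also have "\<dots> = int ((k - 1) mod 2 ^ w)"
    by (rule of_nat_mod[symmetric])
  also have "\<dots> = int (k - 1)"
    using assms(2) by simp
  finally show ?thesis
    unfolding wrap_def by simp
qed

text \<open>Register 0 holds the argument k. Word 0 of the memory is a flag.
  If it is 0 (instructions 0, 1, 59, 60) the answer is simply the word m ! k. Otherwise
  words 1..13 hold the header [b, oCW, oT1, oT2, q, G, oBP, f, 2^f, L, 2^L, e, oSP] and the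
  program computes, for p = k - 1, j = p div b and pos = p mod b:
  the code c = m ! (oCW + j) of block j, its table index t = c b + pos, the in-block rank
  loc = m ! (oT1 + t), the index idx = m ! (oT2 + t) of the symbol among the distinct
  symbols of the block, the in-superblock count bc = field (idx mod q) of word
  m ! (j G + idx div q + oBP), the symbol a = digit L c pos and the superblock count
  m ! sa with sa = (j div 2^e) 2^L + a + oSP; it returns m ! sa + bc + loc.\<close>

definition rank_prog :: "instr list" where
  "rank_prog =
    [ILoad 1 9, IJz 1 59,
     IConst 2 1, ISub 3 0 2, ILoad 4 2, IDiv 5 3 4, IMod 6 3 4,
     IConst 7 2, ILoad 7 7, IAdd 7 7 5, ILoad 8 7,
     IMul 10 8 4, IAdd 10 10 6,
     IConst 7 3, ILoad 7 7, IAdd 7 7 10, ILoad 11 7,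
     IConst 7 4, ILoad 7 7, IAdd 7 7 10, ILoad 12 7,
     IConst 7 5, ILoad 13 7, IDiv 14 12 13, IMod 15 12 13,
     IConst 7 6, ILoad 16 7, IMul 16 5 16, IAdd 16 16 14,
     IConst 7 7, ILoad 7 7, IAdd 16 16 7, ILoad 17 16,
     IConst 7 8, ILoad 7 7, IMul 15 15 7, IShr 17 17 15,
     IConst 7 9, ILoad 7 7, IMod 17 17 7,
     IConst 7 10, ILoad 7 7, IMul 18 6 7, IShr 18 8 18,
     IConst 7 11, ILoad 19 7, IMod 18 18 19,
     IConst 7 12, ILoad 7 7, IShr 20 5 7, IMul 20 20 19, IAdd 20 20 18,
     IConst 7 13, ILoad 7 7, IAdd 20 20 7, ILoad 20 20,
     IAdd 0 20 17, IAdd 0 0 11, IHalt,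
     ILoad 0 0, IHalt]"

lemma rank_prog_direct:
  assumes "m ! 0 = 0" and "k < length m"
  shows "answers_within w m rank_prog 60 k (m ! k)"
proof -
  have "0 < length m" "m \<noteq> []" using assms(2) by auto
  then show ?thesis
    unfolding answers_within_def
    by (intro exI[of _ 3]) (simp add: assms run_numeral run_Suc run_0 step_def rank_prog_def halted_def)
qed

lemma rank_prog_hierarchical:
  fixes m :: "nat list"
  assumes p_def: "p = k - 1"
    and j_def: "j = p div b"
    and pos_def: "pos = p mod b"
    and c_def: "c = m ! (oCW + j)"
    and t_def: "t = c * b + pos"
    and loc_def: "loc = m ! (oT1 + t)"
    and idx_def: "idx = m ! (oT2 + t)"
    and ad_def: "ad = j * G + idx div q + oBP"
    and bc_def: "bc = digit f (m ! ad) (idx mod q)"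
    and a_def: "a = digit L c pos"
    and sa_def: "sa = j div 2 ^ e * 2 ^ L + a + oSP"
  assumes k: "1 \<le> k" "k < 2 ^ w" and w: "4 \<le> w"
    and header: "take 14 m = [1, b, oCW, oT1, oT2, q, G, oBP, f, 2 ^ f, L, 2 ^ L, e, oSP]"
    and addresses: "oCW + j < length m" "oT1 + t < length m" "oT2 + t < length m"
      "ad < length m" "sa < length m" "length m \<le> 2 ^ w"
    and no_overflow: "m ! sa + bc + loc < 2 ^ w" "idx mod q * f < 2 ^ w" "pos * L < 2 ^ w"
  shows "answers_within w m rank_prog 60 k (m ! sa + bc + loc)"
proof -
  have hd_nth: "m ! i = [1, b, oCW, oT1, oT2, q, G, oBP, f, 2 ^ f, L, 2 ^ L, e, oSP] ! i"
    if "i < 14" for i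
    using nth_take[OF that, of m] header by simp
  have hd: "m ! 0 = 1" "m ! 1 = b" "m ! 2 = oCW" "m ! 3 = oT1" "m ! 4 = oT2" "m ! 5 = q"
    "m ! 6 = G" "m ! 7 = oBP" "m ! 8 = f" "m ! 9 = 2 ^ f" "m ! 10 = L" "m ! 11 = 2 ^ L"
    "m ! 12 = e" "m ! 13 = oSP" "m ! Suc 0 = b"
    using hd_nth[of 0] hd_nth[of 1] hd_nth[of 2] hd_nth[of 3] hd_nth[of 4] hd_nth[of 5]
      hd_nth[of 6] hd_nth[of 7] hd_nth[of 8] hd_nth[of 9] hd_nth[of 10] hd_nth[of 11]
      hd_nth[of 12] hd_nth[of 13] by simp_all
  have hd_len: "i < length m" if "i < 14" for i
    using arg_cong[OF header, of length] that by simp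
  have w_pos: "0 < w" using w by simp
  have small_const: "x < 2 ^ w" if "x < 16" for x :: nat
  proof -
    have "(16::nat) = 2 ^ 4" by simp
    also have "\<dots> \<le> 2 ^ w" using w by (intro power_increasing) auto
    finally show ?thesis using that by linarith
  qed
  text \<open>Every intermediate value is bounded by a valid address or by a hypothesis,
    so no arithmetic instruction of the program wraps around.\<close>
  have below: "oCW + j < 2 ^ w" "c * b < 2 ^ w" "t < 2 ^ w" "oT1 + t < 2 ^ w"
    "oT2 + t < 2 ^ w" "j * G < 2 ^ w" "j * G + idx div q < 2 ^ w" "ad < 2 ^ w"
    "j div 2 ^ e * 2 ^ L < 2 ^ w" "j div 2 ^ e * 2 ^ L + a < 2 ^ w" "sa < 2 ^ w"
    "m ! sa + bc < 2 ^ w"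
    using addresses no_overflow unfolding t_def ad_def sa_def by linarith+
  have const_word: "(1::nat) mod 2 ^ w = 1" "(2::nat) mod 2 ^ w = 2" "(3::nat) mod 2 ^ w = 3"
    "(4::nat) mod 2 ^ w = 4" "(5::nat) mod 2 ^ w = 5" "(6::nat) mod 2 ^ w = 6"
    "(7::nat) mod 2 ^ w = 7" "(8::nat) mod 2 ^ w = 8" "(9::nat) mod 2 ^ w = 9"
    "(10::nat) mod 2 ^ w = 10" "(11::nat) mod 2 ^ w = 11" "(12::nat) mod 2 ^ w = 12"
    "(13::nat) mod 2 ^ w = 13"
    by (simp_all add: small_const w_pos)
  have header_addresses: "0 < length m" "1 < length m" "2 < length m" "3 < length m" "4 < length m"
    "5 < length m" "6 < length m" "7 < length m" "8 < length m" "9 < length m"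
    "10 < length m" "11 < length m" "12 < length m" "13 < length m" "m \<noteq> []" "Suc 0 < length m"
    using hd_len[of 0] by (simp_all add: hd_len)
  have wrap: "wrap w (int k - 1) = p" using wrap_pred k unfolding p_def by simp
  note no_wrap = below[THEN mod_less] no_overflow[THEN mod_less]
  show ?thesis
    unfolding answers_within_def
    by (intro exI[of _ 58]) (simp add: run_numeral run_Suc run_0 step_def halted_def rank_prog_def
      const_word wrap no_wrap hd header_addresses addresses w_pos
      j_def[symmetric] pos_def[symmetric] c_def[symmetric] t_def[symmetric]
      loc_def[symmetric] idx_def[symmetric] ad_def[symmetric] bc_def[unfolded digit_def, symmetric]
      a_def[unfolded digit_def, symmetric] sa_def[symmetric])
qed

text \<open>S is the 0-based sequence of n symbols of L bits, blocks have b symbols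
  with b L \<le> w, superblocks have 2^(L + lam) blocks, and counts inside a superblock
  are stored in fields of L + 2 lam bits. The assumption b \<le> 2^lam makes these
  fields large enough; L + 2 lam < w makes at least one of them fit in a word.\<close>

locale rank_layout =
  fixes n w L b lam :: nat and S :: "nat \<Rightarrow> nat"
  assumes n_word: "n < 2 ^ w" and w_min: "4 \<le> w"
    and L_pos: "1 \<le> L" and b_pos: "1 \<le> b" and block_fits: "b * L \<le> w"
    and symbols: "\<And>i. S i < 2 ^ L"
    and count_fits: "L + 2 * lam < w" and block_lam: "b \<le> 2 ^ lam"
begin

definition sup_exp :: nat where "sup_exp = L + lam"
definition cnt_bits :: nat where "cnt_bits = L + 2 * lam"
definition per_word :: nat where "per_word = w div cnt_bits"
definition max_distinct :: nat where "max_distinct = min b (2 ^ L)"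
definition count_words :: nat where "count_words = max_distinct div per_word + 1"
definition nblocks :: nat where "nblocks = n div b + 1"
definition nsupers :: nat where "nsupers = n div b div 2 ^ sup_exp + 1"
definition ncodes :: nat where "ncodes = 2 ^ (b * L)"

definition block_code :: "nat \<Rightarrow> nat" where
  "block_code j = enc L (map (\<lambda>t. S (j * b + t)) [0..<b])"
definition block_symbols :: "nat \<Rightarrow> nat set" where
  "block_symbols j = (\<lambda>t. S (j * b + t)) ` {..<b}"
definition local_rank :: "nat \<Rightarrow> nat \<Rightarrow> nat" where
  "local_rank c pos = card {t. t \<le> pos \<and> digit L c t = digit L c pos}"
definition symbol_index :: "nat \<Rightarrow> nat \<Rightarrow> nat" where
  "symbol_index c pos = card {x. x < digit L c pos \<and> (\<exists>t<b. digit L c t = x)}"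
definition super_start :: "nat \<Rightarrow> nat" where
  "super_start j = j div 2 ^ sup_exp * 2 ^ sup_exp * b"
definition block_count :: "nat \<Rightarrow> nat \<Rightarrow> nat" where
  "block_count j x = card {i. super_start j \<le> i \<and> i < j * b \<and> S i = x}"
definition super_count :: "nat \<Rightarrow> nat \<Rightarrow> nat" where
  "super_count s x = card {i. i < s * 2 ^ sup_exp * b \<and> S i = x}"

text \<open>The five parts of the memory after the header, and their offsets. Word 2 of the
  header is the offset 14 of the code table.\<close>

definition code_tab :: "nat list" where
  "code_tab = map block_code [0..<nblocks]"
definition local_rank_tab :: "nat list" where
  "local_rank_tab = tabulate ncodes b local_rank"
definition index_tab :: "nat list" where
  "index_tab = tabulate ncodes b symbol_index"
definition count_word :: "nat \<Rightarrow> nat \<Rightarrow> nat" where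
  "count_word j g = enc cnt_bits
     (map (\<lambda>u. block_count j (nth_least (block_symbols j) (g * per_word + u))) [0..<per_word])"
definition block_count_tab :: "nat list" where
  "block_count_tab = tabulate nblocks count_words count_word"
definition super_count_tab :: "nat list" where
  "super_count_tab = tabulate nsupers (2 ^ L) super_count"

definition off_local :: nat where "off_local = 14 + nblocks"
definition off_index :: nat where "off_index = off_local + ncodes * b"
definition off_block :: nat where "off_block = off_index + ncodes * b"
definition off_super :: nat where "off_super = off_block + nblocks * count_words"

definition header :: "nat list" where
  "header = [1, b, 14, off_local, off_index, per_word, count_words, off_block, cnt_bits,
    2 ^ cnt_bits, L, 2 ^ L, sup_exp, off_super]"
definition layout :: "nat list" where
  "layout = header @ code_tab @ local_rank_tab @ index_tab @ block_count_tab @ super_count_tab"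

lemma table_lengths [simp]:
  "length header = 14" "length code_tab = nblocks" "length local_rank_tab = ncodes * b"
  "length index_tab = ncodes * b" "length block_count_tab = nblocks * count_words"
  "length super_count_tab = nsupers * 2 ^ L"
  by (simp_all add: header_def code_tab_def local_rank_tab_def index_tab_def
      block_count_tab_def super_count_tab_def)

lemma length_layout:
  "length layout = off_super + nsupers * 2 ^ L"
  by (simp add: layout_def off_super_def off_block_def off_index_def off_local_def)

lemma take_layout: "take 14 layout = header"
  by (simp add: layout_def header_def)

lemma layout_code: "j < nblocks \<Longrightarrow> layout ! (14 + j) = block_code j"
  by (simp add: layout_def nth_append code_tab_def)

lemma layout_local_rank: "t < ncodes * b \<Longrightarrow> layout ! (off_local + t) = local_rank_tab ! t"
  by (simp add: layout_def nth_append off_local_def)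

lemma layout_index: "t < ncodes * b \<Longrightarrow> layout ! (off_index + t) = index_tab ! t"
  by (simp add: layout_def nth_append off_index_def off_local_def)

lemma layout_block_count:
  "t < nblocks * count_words \<Longrightarrow> layout ! (off_block + t) = block_count_tab ! t"
  by (simp add: layout_def nth_append off_block_def off_index_def off_local_def)

lemma layout_super_count:
  "t < nsupers * 2 ^ L \<Longrightarrow> layout ! (off_super + t) = super_count_tab ! t"
  by (simp add: layout_def nth_append off_super_def off_block_def off_index_def off_local_def)

lemma cnt_bits_pos: "0 < cnt_bits" and per_word_pos: "0 < per_word"
  and per_word_fits: "per_word * cnt_bits \<le> w"
  using L_pos count_fits unfolding cnt_bits_def per_word_def
  by (auto simp: div_times_less_eq_dividend div_greater_zero_iff)

lemma digit_block_code: "t < b \<Longrightarrow> digit L (block_code j) t = S (j * b + t)"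
  unfolding block_code_def by (subst digit_enc) (auto simp: symbols)

lemma block_code_less: "block_code j < ncodes"
proof -
  have "block_code j < 2 ^ (L * length (map (\<lambda>t. S (j * b + t)) [0..<b]))"
    unfolding block_code_def by (rule enc_less) (auto simp: symbols)
  then show ?thesis
    unfolding ncodes_def by (simp add: mult.commute)
qed

lemma local_rank_block_code:
  assumes "pos < b"
  shows "local_rank (block_code j) pos = card {t. t \<le> pos \<and> S (j * b + t) = S (j * b + pos)}"
proof -
  have "{t. t \<le> pos \<and> digit L (block_code j) t = digit L (block_code j) pos}
      = {t. t \<le> pos \<and> S (j * b + t) = S (j * b + pos)}"
    using assms by (auto simp: digit_block_code)
  then show ?thesis
    unfolding local_rank_def by simp
qed

lemma symbol_index_block_code:
  assumes "pos < b"
  shows "symbol_index (block_code j) pos = rank_in (block_symbols j) (S (j * b + pos))"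
proof -
  have "{x. x < digit L (block_code j) pos \<and> (\<exists>t<b. digit L (block_code j) t = x)}
      = {y \<in> block_symbols j. y < S (j * b + pos)}"
    using assms by (auto simp: digit_block_code block_symbols_def)
  then show ?thesis
    unfolding symbol_index_def rank_in_def by simp
qed

lemma card_block_symbols: "card (block_symbols j) \<le> max_distinct"
proof -
  have "card (block_symbols j) \<le> card {..<b}"
    unfolding block_symbols_def by (rule card_image_le) simp
  moreover have "card (block_symbols j) \<le> card {..<(2::nat) ^ L}"
    by (rule card_mono) (auto simp: block_symbols_def symbols)
  ultimately show ?thesis
    unfolding max_distinct_def by simp
qed

lemma max_distinct_less: "max_distinct < count_words * per_word"
proof -
  have "max_distinct = max_distinct div per_word * per_word + max_distinct mod per_word"
    by simp
  moreover have "max_distinct mod per_word < per_word"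
    using per_word_pos by simp
  ultimately have "max_distinct < max_distinct div per_word * per_word + per_word"
    by linarith
  then show ?thesis
    unfolding count_words_def by (simp add: algebra_simps)
qed

text \<open>In-superblock counts fit into a field of cnt_bits bits: a superblock spans
  2^sup_exp blocks of b \<le> 2^lam positions.\<close>

lemma block_count_less: "block_count j x < 2 ^ cnt_bits"
proof -
  have "block_count j x \<le> card {super_start j..<j * b}"
    unfolding block_count_def by (rule card_mono) auto
  also have "\<dots> = j mod 2 ^ sup_exp * b"
  proof -
    have "j * b = (j div 2 ^ sup_exp * 2 ^ sup_exp + j mod 2 ^ sup_exp) * b"
      by (simp only: div_mult_mod_eq)
    then show ?thesis
      unfolding super_start_def by (simp add: add_mult_distrib)
  qed
  also have "\<dots> < 2 ^ sup_exp * b"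
    using b_pos by simp
  also have "\<dots> \<le> 2 ^ sup_exp * 2 ^ lam"
    using block_lam by simp
  also have "\<dots> = 2 ^ cnt_bits"
    unfolding sup_exp_def cnt_bits_def by (simp add: power_add[symmetric])
  finally show ?thesis .
qed

lemma block_count_lookup:
  assumes "j < nblocks" and "x \<in> block_symbols j"
  defines "idx \<equiv> rank_in (block_symbols j) x"
  shows "idx div per_word < count_words"
    and "digit cnt_bits (block_count_tab ! (j * count_words + idx div per_word)) (idx mod per_word)
           = block_count j x"
proof -
  have fin: "finite (block_symbols j)"
    unfolding block_symbols_def by simp
  have "idx < count_words * per_word"
    using rank_in_less_card[OF fin assms(2)] card_block_symbols[of j] max_distinct_less
    unfolding idx_def by linarith
  then show g: "idx div per_word < count_words"
    using per_word_pos by (simp add: div_less_iff_less_mult)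
  have "digit cnt_bits (count_word j (idx div per_word)) (idx mod per_word)
      = block_count j (nth_least (block_symbols j) (idx div per_word * per_word + idx mod per_word))"
    unfolding count_word_def using per_word_pos
    by (subst digit_enc) (auto simp: block_count_less)
  also have "\<dots> = block_count j x"
    using nth_least_rank_in[OF fin assms(2)] unfolding idx_def by simp
  finally show "digit cnt_bits (block_count_tab ! (j * count_words + idx div per_word))
      (idx mod per_word) = block_count j x"
    unfolding block_count_tab_def using nth_tabulate[OF assms(1) g] by simp
qed

lemma rank_split:
  fixes p :: nat
  defines "j \<equiv> p div b" and "pos \<equiv> p mod b"
  shows "card {i. i \<le> p \<and> S i = S p}
    = super_count (j div 2 ^ sup_exp) (S p) + block_count j (S p)
      + card {t. t \<le> pos \<and> S (j * b + t) = S p}"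
proof -
  have "super_start j \<le> j * b"
    unfolding super_start_def by (rule mult_le_mono1) (rule div_times_less_eq_dividend)
  moreover have "j * b \<le> p" and "p - j * b = pos"
    unfolding j_def pos_def by (simp_all add: div_times_less_eq_dividend minus_div_mult_eq_mod)
  ultimately show ?thesis
    using card_prefix_split[of "super_start j" "j * b" p "\<lambda>i. S i = S p"]
    unfolding super_count_def block_count_def super_start_def by simp
qed

lemma local_lookups:
  assumes "j < nblocks" and "pos < b"
  defines "t \<equiv> block_code j * b + pos"
  shows "t < ncodes * b"
    and "layout ! (off_local + t) = card {u. u \<le> pos \<and> S (j * b + u) = S (j * b + pos)}"
    and "layout ! (off_index + t) = rank_in (block_symbols j) (S (j * b + pos))"
proof -
  have "t < (block_code j + 1) * b"
    unfolding t_def using assms(2) by simp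
  also have "\<dots> \<le> ncodes * b"
    using block_code_less[of j] by (intro mult_le_mono1) simp
  finally show t_lt: "t < ncodes * b" .
  show "layout ! (off_local + t) = card {u. u \<le> pos \<and> S (j * b + u) = S (j * b + pos)}"
    using layout_local_rank[OF t_lt] nth_tabulate[OF block_code_less assms(2)]
      local_rank_block_code[OF assms(2)]
    unfolding t_def local_rank_tab_def by simp
  show "layout ! (off_index + t) = rank_in (block_symbols j) (S (j * b + pos))"
    using layout_index[OF t_lt] nth_tabulate[OF block_code_less assms(2)]
      symbol_index_block_code[OF assms(2)]
    unfolding t_def index_tab_def by simp
qed

lemma count_lookups:
  assumes "j < nblocks" and "pos < b"
  defines "x \<equiv> S (j * b + pos)"
  defines "idx \<equiv> rank_in (block_symbols j) x"
  defines "ad \<equiv> j * count_words + idx div per_word"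
  defines "sa \<equiv> j div 2 ^ sup_exp * 2 ^ L + x"
  shows "ad < nblocks * count_words"
    and "digit cnt_bits (layout ! (off_block + ad)) (idx mod per_word) = block_count j x"
    and "sa < nsupers * 2 ^ L"
    and "layout ! (off_super + sa) = super_count (j div 2 ^ sup_exp) x"
proof -
  have x_mem: "x \<in> block_symbols j"
    unfolding x_def block_symbols_def using assms(2) by blast
  note block = block_count_lookup[OF assms(1) x_mem, folded idx_def]
  have "ad < (j + 1) * count_words"
    unfolding ad_def using block(1) by simp
  also have "\<dots> \<le> nblocks * count_words"
    using assms(1) by (intro mult_le_mono1) simp
  finally show ad_lt: "ad < nblocks * count_words" .
  show "digit cnt_bits (layout ! (off_block + ad)) (idx mod per_word) = block_count j x"
    using layout_block_count[OF ad_lt] block(2) unfolding ad_def by simp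
  have s_lt: "j div 2 ^ sup_exp < nsupers"
    using assms(1) unfolding nblocks_def nsupers_def by (simp add: div_le_mono less_Suc_eq_le)
  have x_lt: "x < 2 ^ L"
    unfolding x_def by (rule symbols)
  have "sa < (j div 2 ^ sup_exp + 1) * 2 ^ L"
    unfolding sa_def using x_lt by simp
  also have "\<dots> \<le> nsupers * 2 ^ L"
    using s_lt by (intro mult_le_mono1) simp
  finally show sa_lt: "sa < nsupers * 2 ^ L" .
  show "layout ! (off_super + sa) = super_count (j div 2 ^ sup_exp) x"
    using layout_super_count[OF sa_lt] nth_tabulate[OF s_lt x_lt]
    unfolding sa_def super_count_tab_def by simp
qed

theorem layout_answers:
  assumes fits: "length layout \<le> n" and k: "1 \<le> k" "k \<le> n"
  shows "answers_within w layout rank_prog 60 k (card {i. i \<le> k - 1 \<and> S i = S (k - 1)})"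
proof -
  define p where "p = k - 1"
  define j where "j = p div b"
  define pos where "pos = p mod b"
  define c where "c = layout ! (14 + j)"
  define t where "t = c * b + pos"
  define loc where "loc = layout ! (off_local + t)"
  define idx where "idx = layout ! (off_index + t)"
  define ad where "ad = j * count_words + idx div per_word + off_block"
  define bc where "bc = digit cnt_bits (layout ! ad) (idx mod per_word)"
  define a where "a = digit L c pos"
  define sa where "sa = j div 2 ^ sup_exp * 2 ^ L + a + off_super"
  have j_lt: "j < nblocks"
    using k unfolding j_def p_def nblocks_def by (simp add: div_le_mono less_Suc_eq_le)
  have pos_lt: "pos < b"
    unfolding pos_def using b_pos by simp
  have p_eq: "j * b + pos = p"
    unfolding j_def pos_def by simp
  have c_eq: "c = block_code j"
    unfolding c_def using layout_code[OF j_lt] .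
  have a_eq: "a = S p"
    unfolding a_def c_eq using digit_block_code[OF pos_lt] p_eq by simp
  note local = local_lookups[OF j_lt pos_lt, folded c_eq t_def, unfolded p_eq]
  note count = count_lookups[OF j_lt pos_lt, unfolded p_eq, folded a_eq local(3)[folded idx_def]]
  have bc_eq: "bc = block_count j a"
    using count(2) unfolding bc_def ad_def by (simp add: add.commute idx_def)
  have sa_eq: "layout ! sa = super_count (j div 2 ^ sup_exp) a"
    using count(4) unfolding sa_def by (simp add: add.commute)
  have answer: "layout ! sa + bc + loc = card {i. i \<le> p \<and> S i = S p}"
    using rank_split[of p] unfolding sa_eq bc_eq loc_def local(2) a_eq
    by (simp add: j_def pos_def p_eq)
  have "answers_within w layout rank_prog 60 k (layout ! sa + bc + loc)"
  proof (rule rank_prog_hierarchical[OF p_def j_def pos_def c_def t_def loc_def idx_def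
        ad_def bc_def a_def sa_def k(1) _ _ take_layout[unfolded header_def]])
    show "k < 2 ^ w" "length layout \<le> 2 ^ w" "4 \<le> w"
      using k fits n_word w_min by linarith+
    note layout_bounds = fits length_layout j_lt local(1) count(1,3) ad_def sa_def idx_def
      off_super_def off_block_def off_index_def off_local_def
    show "14 + j < length layout" using layout_bounds by linarith
    show "off_local + t < length layout" using layout_bounds by linarith
    show "off_index + t < length layout" using layout_bounds by linarith
    show "ad < length layout" using layout_bounds by linarith
    show "sa < length layout" using layout_bounds by linarith
    have "card {i. i \<le> p \<and> S i = S p} \<le> card {..p}"
      by (rule card_mono) auto
    then show "layout ! sa + bc + loc < 2 ^ w"
      using answer k n_word unfolding p_def by simp
    have "idx mod per_word * cnt_bits < per_word * cnt_bits"
      using per_word_pos cnt_bits_pos by simp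
    then show "idx mod per_word * cnt_bits < 2 ^ w"
      using per_word_fits less_exp[of w] by linarith
    have "pos * L < b * L"
      using pos_lt L_pos by simp
    then show "pos * L < 2 ^ w"
      using block_fits less_exp[of w] by linarith
  qed
  then show ?thesis
    using answer unfolding p_def by simp
qed

lemma header_words:
  assumes fits: "length layout \<le> n"
  shows "\<forall>x\<in>set header. x < 2 ^ w"
proof -
  have w_lt: "w + 1 < 2 ^ w"
  proof -
    have "(2::nat) ^ w = 2 * 2 ^ (w - 1)"
      using w_min by (cases w) auto
    then show ?thesis
      using less_exp[of "w - 1"] w_min by linarith
  qed
  have "b \<le> w"
    using block_fits L_pos by (metis le_trans mult_le_mono2 mult_1_right)
  then have "count_words \<le> w + 1"
    unfolding count_words_def max_distinct_def
    by (meson add_le_mono1 div_le_dividend le_trans min.cobounded1)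
  moreover have "off_local \<le> length layout" "off_index \<le> length layout"
    "off_block \<le> length layout" "off_super \<le> length layout" "length layout < 2 ^ w"
    using fits n_word length_layout off_super_def off_block_def off_index_def by linarith+
  moreover have "(2::nat) ^ cnt_bits < 2 ^ w" "(2::nat) ^ L < 2 ^ w"
    using count_fits unfolding cnt_bits_def by simp_all
  moreover have "per_word \<le> w" "sup_exp < w" "L < w" "cnt_bits < w"
    using count_fits unfolding per_word_def sup_exp_def cnt_bits_def by simp_all
  moreover have "(14::nat) < 2 ^ w"
  proof -
    have "(14::nat) < 2 ^ 4" by simp
    also have "\<dots> \<le> 2 ^ w" using w_min by (intro power_increasing) auto
    finally show ?thesis .
  qed
  ultimately show ?thesis
    using \<open>b \<le> w\<close> w_lt less_exp[of w]
    unfolding header_def by auto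
qed

text \<open>Then the tables indexed by block codes: codes have b L \<le> w bits, local ranks
  are at most b and symbol indices are below 2^L.\<close>

lemma code_table_words:
  "\<forall>x\<in>set code_tab. x < 2 ^ w" "\<forall>x\<in>set local_rank_tab. x < 2 ^ w"
  "\<forall>x\<in>set index_tab. x < 2 ^ w"
proof -
  have b_small: "b < 2 ^ w"
    using block_fits L_pos less_exp[of w] by (metis le_less_trans le_trans mult_le_mono2 mult_1_right)
  show "\<forall>x\<in>set code_tab. x < 2 ^ w"
  proof -
    have "ncodes \<le> 2 ^ w"
      unfolding ncodes_def using block_fits by (intro power_increasing) auto
    then show ?thesis
      unfolding code_tab_def using block_code_less less_le_trans by auto
  qed
  show "\<forall>x\<in>set local_rank_tab. x < 2 ^ w"
    unfolding local_rank_tab_def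
  proof (rule tabulate_bound)
    fix c pos assume "pos < b"
    moreover have "local_rank c pos \<le> card {..pos}"
      unfolding local_rank_def by (rule card_mono) auto
    ultimately show "local_rank c pos < 2 ^ w"
      using b_small by simp
  qed
  show "\<forall>x\<in>set index_tab. x < 2 ^ w"
    unfolding index_tab_def
  proof (rule tabulate_bound)
    fix c pos
    have "symbol_index c pos \<le> card {..<digit L c pos}"
      unfolding symbol_index_def by (rule card_mono) auto
    also have "\<dots> < 2 ^ L"
      by (simp add: digit_less)
    also have "(2::nat) ^ L \<le> 2 ^ w"
      using count_fits by simp
    finally show "symbol_index c pos < 2 ^ w" .
  qed
qed

text \<open>Then the count tables: packed count words have per_word cnt_bits \<le> w bits, and
  superblock counts are at most n.\<close>

lemma count_table_words:
  "\<forall>x\<in>set block_count_tab. x < 2 ^ w" "\<forall>x\<in>set super_count_tab. x < 2 ^ w"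
proof -
  show "\<forall>x\<in>set block_count_tab. x < 2 ^ w"
    unfolding block_count_tab_def
  proof (rule tabulate_bound)
    fix j g
    have "count_word j g < 2 ^ (cnt_bits * length (map (\<lambda>u. block_count j
        (nth_least (block_symbols j) (g * per_word + u))) [0..<per_word]))"
      unfolding count_word_def by (rule enc_less) (auto simp: block_count_less)
    also have "\<dots> \<le> 2 ^ w"
      using per_word_fits by (intro power_increasing) (auto simp: mult.commute)
    finally show "count_word j g < 2 ^ w" .
  qed
  show "\<forall>x\<in>set super_count_tab. x < 2 ^ w"
    unfolding super_count_tab_def
  proof (rule tabulate_bound)
    fix s x assume "s < nsupers"
    then have "s * 2 ^ sup_exp \<le> n div b div 2 ^ sup_exp * 2 ^ sup_exp"
      unfolding nsupers_def by (intro mult_le_mono1) simp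
    also have "\<dots> \<le> n div b"
      by (rule div_times_less_eq_dividend)
    finally have "s * 2 ^ sup_exp * b \<le> n"
      using div_times_less_eq_dividend[of n b] by (meson le_trans mult_le_mono1)
    moreover have "super_count s x \<le> card {..<s * 2 ^ sup_exp * b}"
      unfolding super_count_def by (rule card_mono) auto
    ultimately show "super_count s x < 2 ^ w"
      using n_word by simp
  qed
qed

theorem layout_words:
  assumes fits: "length layout \<le> n"
  shows "\<forall>x\<in>set layout. x < 2 ^ w"
  using header_words[OF fits] code_table_words count_table_words
  unfolding layout_def by auto

end

lemma square_less_exp: "5 \<le> v \<Longrightarrow> v ^ 2 < (2::nat) ^ v"
proof (induction v rule: dec_induct)
  case base
  then show ?case by simp
next
  case (step v)
  have "(Suc v) ^ 2 = v ^ 2 + 2 * v + 1"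
    by (simp add: power2_eq_square)
  also have "\<dots> < v ^ 2 + v ^ 2"
  proof -
    have "5 * v \<le> v * v"
      using step(1) by (intro mult_le_mono1)
    then show ?thesis
      using step(1) unfolding power2_eq_square by linarith
  qed
  also have "\<dots> < 2 ^ v + 2 ^ v"
    using step(3) by simp
  finally show ?case by simp
qed

lemma square_le_exp: "v ^ 2 \<le> (2::nat) ^ (v + 1)"
proof (cases "5 \<le> v")
  case True
  then show ?thesis using square_less_exp[of v] by simp
next
  case False
  then have "v \<in> {0, 1, 2, 3, 4}" by auto
  then show ?thesis by auto
qed

text \<open>Polynomials are eventually dominated by the exponential; this is how large word
  sizes make the lookup tables negligible.\<close>

lemma linear_below_exp: "\<exists>V. \<forall>v\<ge>V. c * (v + 1) < (2::nat) ^ v"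
proof (intro exI allI impI)
  fix v :: nat assume v: "c + 5 \<le> v"
  have "c * (v + 1) \<le> (v - 1) * (v + 1)"
    using v by (intro mult_le_mono1) simp
  also have "\<dots> < v ^ 2"
    using v by (cases v) (auto simp: power2_eq_square)
  also have "\<dots> < 2 ^ v"
    using v by (intro square_less_exp) simp
  finally show "c * (v + 1) < 2 ^ v" .
qed

lemma poly_below_exp: "\<exists>W. \<forall>w\<ge>W. (2 * (w + 16)) ^ k < (2::nat) ^ w"
proof (cases "k = 0")
  case True
  have "(1::nat) < 2 ^ w" if "1 \<le> w" for w :: nat
  proof -
    have "(2::nat) ^ 1 \<le> 2 ^ w"
      using that by (intro power_increasing) auto
    then show ?thesis by simp
  qed
  then show ?thesis
    using True by (intro exI[of _ 1]) simp
next
  case False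
  obtain V where V: "\<And>v. v \<ge> V \<Longrightarrow> (2 * k + 32) * (v + 1) < (2::nat) ^ v"
    using linear_below_exp by blast
  show ?thesis
  proof (intro exI[of _ "k * V"] allI impI)
    fix w assume w: "k * V \<le> w"
    define v where "v = w div k"
    have "V \<le> v"
      unfolding v_def using div_le_mono[OF w, of k] False by simp
    moreover have "w < k * (v + 1)"
      unfolding v_def using False by (simp add: dividend_less_times_div)
    ultimately have "2 * (w + 16) < 2 ^ v"
      using V[of v] by (simp add: algebra_simps)
    then have "(2 * (w + 16)) ^ k < (2 ^ v) ^ k"
      using False by (intro power_strict_mono) auto
    also have "\<dots> = 2 ^ (v * k)"
      by (simp add: power_mult)
    also have "\<dots> \<le> 2 ^ w"
      unfolding v_def by (intro power_increasing) (auto simp: div_times_less_eq_dividend)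
    finally show "(2 * (w + 16)) ^ k < (2::nat) ^ w" .
  qed
qed

lemma block_size:
  fixes w D L :: nat
  assumes D: "1 \<le> D" and L: "1 \<le> L" and wide: "16 * D * L \<le> w"
  defines "b \<equiv> w div (2 * D * L)"
  shows "8 \<le> b" and "b * L \<le> w" and "w < 4 * D * L * b"
    and "2 * (b * L) * D \<le> w" and "w \<le> (b * L) * (3 * D)"
proof -
  define k where "k = 2 * D * L"
  have k_pos: "1 \<le> k"
    unfolding k_def using D L by simp
  have below: "b * k \<le> w"
    unfolding b_def k_def by (rule div_times_less_eq_dividend)
  have above: "w < (b + 1) * k"
    unfolding b_def k_def using k_pos k_def by (simp add: dividend_less_div_times)
  have "(16 * D * L) div k = 8"
    unfolding k_def using D L by simp
  moreover have "(16 * D * L) div k \<le> w div k"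
    using wide by (rule div_le_mono)
  ultimately show b8: "8 \<le> b"
    unfolding b_def k_def by simp
  have "b * L \<le> b * k"
    unfolding k_def using D by simp
  then show "b * L \<le> w"
    using below by linarith
  have "(b + 1) * k \<le> (2 * b) * k"
    using b8 by (intro mult_le_mono1) simp
  moreover have "(2 * b) * k = 4 * D * L * b"
    unfolding k_def by (simp add: algebra_simps)
  ultimately show "w < 4 * D * L * b"
    using above by linarith
  show "2 * (b * L) * D \<le> w"
    using below unfolding k_def by (simp add: algebra_simps)
  have "8 * (D * L) \<le> b * (D * L)"
    using b8 by (rule mult_le_mono1)
  moreover have "(b + 1) * k = 2 * (D * (b * L)) + 2 * (D * L)"
    and "b * (D * L) = D * (b * L)"
    unfolding k_def by (simp_all add: algebra_simps)
  ultimately have "w \<le> 3 * (D * (b * L))"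
    using above by linarith
  then show "w \<le> (b * L) * (3 * D)"
    by (simp add: algebra_simps)
qed

lemma block_code_count:
  fixes n w D B :: nat
  assumes D: "1 \<le> D" and word: "2 ^ w \<le> (n + 1) ^ D"
    and bits: "2 * B * D \<le> w" "w \<le> B * (3 * D)"
  shows "2 ^ B * 2 ^ B \<le> n + 1" and "(2::nat) ^ w \<le> (2 ^ B) ^ (3 * D)"
proof -
  have "(2::nat) ^ (2 * B * D) \<le> 2 ^ w"
    using bits(1) by (intro power_increasing) auto
  also note word
  finally have "(2 ^ (2 * B)) ^ Suc (D - 1) \<le> (n + 1) ^ Suc (D - 1)"
    using D by (simp add: power_mult)
  then have "2 ^ (2 * B) \<le> n + 1"
    by (rule power_le_imp_le_base) simp
  then show "2 ^ B * 2 ^ B \<le> n + 1"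
    by (simp add: mult_2 power_add)
  have "(2::nat) ^ w \<le> 2 ^ (B * (3 * D))"
    using bits(2) by (intro power_increasing) auto
  then show "(2::nat) ^ w \<le> (2 ^ B) ^ (3 * D)"
    by (simp add: power_mult)
qed

lemma code_count_large:
  fixes Y w D :: nat
  assumes D: "1 \<le> D" and poly: "(2 * (w + 16)) ^ (6 * D) < 2 ^ w"
    and codes: "2 ^ w \<le> Y ^ (3 * D)"
  shows "2 * (w + 16) ^ 2 \<le> Y"
proof (rule ccontr)
  assume "\<not> 2 * (w + 16) ^ 2 \<le> Y"
  then have "Y ^ (3 * D) < (2 * (w + 16) ^ 2) ^ (3 * D)"
    using D by (intro power_strict_mono) auto
  also have "\<dots> \<le> ((2 * (w + 16)) ^ 2) ^ (3 * D)"
  proof (rule power_mono)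
    show "2 * (w + 16) ^ 2 \<le> (2 * (w + 16)) ^ 2"
      by (simp only: power_mult_distrib) simp
  qed simp
  also have "\<dots> = (2 * (w + 16)) ^ (6 * D)"
    by (simp add: power_mult[symmetric])
  finally show False
    using poly codes by linarith
qed

lemma counter_width:
  fixes w :: nat
  assumes w: "0 < w" and poly: "(2 * (w + 16)) ^ 16 < 2 ^ w"
  shows "w \<le> 2 ^ ceillog2 w" and "2 ^ ceillog2 w < 2 * w" and "16 * ceillog2 w < w"
proof -
  show "w \<le> 2 ^ ceillog2 w"
    by (rule le_two_power_ceillog2)
  show lam: "2 ^ ceillog2 w < 2 * w"
    using w by (rule two_power_ceillog2_gt)
  have "(2::nat) ^ (16 * ceillog2 w) = (2 ^ ceillog2 w) ^ 16"
    by (simp add: power_mult[symmetric] mult.commute)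
  also have "\<dots> < (2 * w) ^ 16"
    using lam by (intro power_strict_mono) auto
  also have "\<dots> \<le> (2 * (w + 16)) ^ 16"
    by (intro power_mono) auto
  also have "\<dots> < 2 ^ w"
    by (rule poly)
  finally show "16 * ceillog2 w < w"
    by (rule power_less_imp_less_exp[rotated]) simp
qed

definition layout_size :: "nat \<Rightarrow> nat \<Rightarrow> nat \<Rightarrow> nat \<Rightarrow> nat \<Rightarrow> nat" where
  "layout_size n w L b lam = 14 + (n div b + 1) + 2 * (2 ^ (b * L) * b)
     + (n div b + 1) * (min b (2 ^ L) div (w div (L + 2 * lam)) + 1)
     + (n div b div 2 ^ (L + lam) + 1) * 2 ^ L"

locale block_parameters =
  fixes n w D L b lam :: nat
  assumes D_pos: "1 \<le> D" and L_pos: "1 \<le> L" and b_min: "8 \<le> b"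
    and block_fits: "b * L \<le> w" and block_big: "w < 4 * D * L * b" and w_L: "16 * L \<le> w"
    and lam_low: "w \<le> 2 ^ lam" and lam_high: "2 ^ lam < 2 * w" and lam_small: "16 * lam < w"
    and codes_large: "2 * (w + 16) ^ 2 \<le> 2 ^ (b * L)"
    and codes_few: "2 ^ (b * L) * 2 ^ (b * L) \<le> n + 1"
begin

lemma b_le_w: "b \<le> w"
  using block_fits L_pos by (metis le_trans mult_le_mono2 mult_1_right)

lemma field_words: "4 * (L + 2 * lam) \<le> w"
proof -
  have "4 * (L + 2 * lam) = 4 * L + 8 * lam"
    by simp
  then show ?thesis
    using w_L lam_small by linarith
qed

text \<open>The per-block counter fields take O(L b) bits in total: either the block has few
  symbols (b \<le> 2^L, so lam = O(D L)), or the alphabet is tiny (2^L < b).\<close>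

lemma distinct_fields_bits: "min b (2 ^ L) * (L + 2 * lam) \<le> (36 * D + 5) * L * b"
proof (cases "b \<le> 2 ^ L")
  case True
  have "(2::nat) ^ lam < 2 * (4 * D * L * b)"
    using lam_high block_big by linarith
  also have "\<dots> = 8 * D * (L * b)"
    by simp
  also have "\<dots> \<le> 8 * D * (2 ^ L * 2 ^ L)"
    using True less_exp[of L] by (intro mult_le_mono2 mult_le_mono) auto
  also have "\<dots> < 2 ^ (8 * D) * (2 ^ L * 2 ^ L)"
    by (rule mult_strict_right_mono) (use less_exp[of "8 * D"] in auto)
  also have "\<dots> = 2 ^ (8 * D + (L + L))"
    by (simp only: power_add)
  also have "8 * D + (L + L) = 8 * D + 2 * L"
    by simp
  finally have "lam < 8 * D + 2 * L"
    by (rule power_less_imp_less_exp[rotated]) simp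
  moreover have "D \<le> D * L"
    using L_pos by simp
  ultimately have "2 * lam \<le> 16 * (D * L) + 4 * L"
    by linarith
  then have "L + 2 * lam \<le> (16 * D + 5) * L"
    by (simp add: algebra_simps)
  then have "min b (2 ^ L) * (L + 2 * lam) \<le> b * ((16 * D + 5) * L)"
    by (intro mult_le_mono) auto
  then show ?thesis
    by (simp add: algebra_simps)
next
  case False
  then have "2 ^ L * L \<le> b * L"
    by (intro mult_le_mono1) simp
  then have small_L: "2 ^ L * L \<le> w"
    using block_fits by linarith
  have small_lam: "2 ^ L * lam \<le> 2 * w"
  proof (cases "lam \<le> 2 * L")
    case True
    then have "2 ^ L * lam \<le> 2 * (2 ^ L * L)"
      by simp
    then show ?thesis
      using small_L by linarith
  next
    case False
    have "(2 ^ L * lam) ^ 2 = 2 ^ (2 * L) * lam ^ 2"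
      by (simp add: power_mult_distrib power_mult[symmetric] mult.commute)
    also have "\<dots> \<le> 2 ^ (lam - 1) * 2 ^ (lam + 1)"
      using False by (intro mult_le_mono power_increasing square_le_exp) auto
    also have "\<dots> = 2 ^ (lam - 1 + (lam + 1))"
      by (rule power_add[symmetric])
    also have "lam - 1 + (lam + 1) = lam * 2"
      using False by simp
    also have "(2::nat) ^ (lam * 2) = (2 ^ lam) ^ 2"
      by (rule power_mult)
    finally have "2 ^ L * lam \<le> 2 ^ lam"
      by (rule power2_le_imp_le) simp
    then show ?thesis
      using lam_high by simp
  qed
  have "min b (2 ^ L) * (L + 2 * lam) \<le> 2 ^ L * (L + 2 * lam)"
    by (intro mult_le_mono1) simp
  also have "\<dots> = 2 ^ L * L + 2 * (2 ^ L * lam)"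
    by (simp add: algebra_simps)
  also have "\<dots> \<le> 5 * (4 * D * L * b)"
    using small_L small_lam block_big by linarith
  also have "\<dots> \<le> (36 * D + 5) * L * b"
    by (simp add: algebra_simps)
  finally show ?thesis .
qed

definition blocks :: nat where "blocks = n div b"
definition codes :: nat where "codes = 2 ^ (b * L)"
definition fields_per_word :: nat where "fields_per_word = w div (L + 2 * lam)"
definition count_groups :: nat where "count_groups = min b (2 ^ L) div fields_per_word"
definition super_words :: nat where "super_words = blocks div 2 ^ (L + lam) * 2 ^ L"

lemma layout_size_eq:
  "layout_size n w L b lam = 14 + (blocks + 1) + 2 * (codes * b) + (blocks + 1) * (count_groups + 1)
     + super_words + 2 ^ L"
  unfolding layout_size_def blocks_def codes_def count_groups_def fields_per_word_def
    super_words_def by (simp add: algebra_simps)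

lemma blocks_bound: "blocks * b \<le> n" and blocks_small: "8 * blocks \<le> n"
proof -
  show "blocks * b \<le> n"
    unfolding blocks_def by (rule div_times_less_eq_dividend)
  then show "8 * blocks \<le> n"
    using b_min by (metis le_trans mult_le_mono1 mult.commute)
qed

lemma fields_per_word_large: "4 \<le> fields_per_word" and word_fields: "w < 2 * fields_per_word * (L + 2 * lam)"
proof -
  show q4: "4 \<le> fields_per_word"
    unfolding fields_per_word_def using L_pos field_words
    by (simp add: less_eq_div_iff_mult_less_eq mult.commute)
  have "w < (fields_per_word + 1) * (L + 2 * lam)"
    unfolding fields_per_word_def using L_pos by (simp add: dividend_less_div_times)
  also have "\<dots> \<le> 2 * fields_per_word * (L + 2 * lam)"
    using q4 by (intro mult_le_mono1) simp
  finally show "w < 2 * fields_per_word * (L + 2 * lam)" .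
qed

lemma count_groups_bound: "count_groups * fields_per_word \<le> min b (2 ^ L)"
  and count_groups_small: "4 * count_groups \<le> b"
proof -
  show bound: "count_groups * fields_per_word \<le> min b (2 ^ L)"
    unfolding count_groups_def by (rule div_times_less_eq_dividend)
  have "4 * count_groups \<le> count_groups * fields_per_word"
    using fields_per_word_large by simp
  then show "4 * count_groups \<le> b"
    using bound by linarith
qed

lemma super_words_small: "super_words * w \<le> blocks"
proof -
  have "(2::nat) ^ L * w \<le> 2 ^ L * 2 ^ lam"
    using lam_low by (rule mult_le_mono2)
  then have "super_words * w \<le> blocks div 2 ^ (L + lam) * 2 ^ (L + lam)"
    unfolding super_words_def by (simp add: power_add mult.assoc)
  also have "\<dots> \<le> blocks"
    by (rule div_times_less_eq_dividend)
  finally show ?thesis .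
qed

lemma codes_bound: "2 * (w + 16) ^ 2 * codes \<le> n + 1"
proof -
  have "2 * (w + 16) ^ 2 * codes \<le> codes * codes"
    using codes_large unfolding codes_def by (rule mult_le_mono1)
  then show ?thesis
    using codes_few unfolding codes_def by linarith
qed

text \<open>The layout has at most n words: codes, lookup tables and counts are each a
  fraction of n because there are at most sqrt(n+1) codes and each block holds b \<ge> 8
  symbols.\<close>

theorem layout_size_fits: "layout_size n w L b lam \<le> n"
proof -
  have "super_words \<le> super_words * w"
    using w_L L_pos by simp
  then have super: "super_words \<le> blocks"
    using super_words_small by linarith
  have "blocks * (4 * count_groups) \<le> blocks * b"
    using count_groups_small by (rule mult_le_mono2)
  then have counts: "4 * (blocks * count_groups) \<le> n"
    unfolding mult.left_commute[of 4 blocks] using blocks_bound by linarith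
  have alphabet: "(2::nat) ^ L \<le> codes"
    unfolding codes_def using b_min by (intro power_increasing) auto
  have tables: "codes * b \<le> w * codes" "w \<le> w * codes" "1 \<le> codes"
    using b_le_w unfolding codes_def by auto
  have "2 * (w + 16) ^ 2 * codes = 2 * (w * w * codes) + 64 * (w * codes) + 512 * codes"
    by (simp add: power2_eq_square algebra_simps)
  then have codes_n: "2 * (w * w * codes) + 64 * (w * codes) + 512 * codes \<le> n + 1"
    using codes_bound by linarith
  have "layout_size n w L b lam = 16 + 2 * blocks + 2 * (codes * b) + blocks * count_groups
      + count_groups + super_words + 2 ^ L"
    unfolding layout_size_eq by (simp add: algebra_simps)
  then show ?thesis
    using super counts alphabet tables codes_n blocks_small count_groups_small b_le_w by linarith
qed

lemma blocks_times_w: "blocks * w \<le> 4 * (D * L * n)"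
proof -
  have "blocks * w \<le> blocks * (4 * D * L * b)"
    using block_big by (intro mult_le_mono2) simp
  also have "\<dots> = 4 * (D * L) * (blocks * b)"
    by (simp add: algebra_simps)
  also have "\<dots> \<le> 4 * (D * L) * n"
    using blocks_bound by (intro mult_le_mono2)
  finally show ?thesis by (simp add: algebra_simps)
qed

lemma count_groups_times_w: "count_groups * w \<le> 2 * (min b (2 ^ L) * (L + 2 * lam))"
proof -
  have "count_groups * w \<le> count_groups * (2 * fields_per_word * (L + 2 * lam))"
    using word_fields by (intro mult_le_mono2) simp
  also have "\<dots> = 2 * (L + 2 * lam) * (count_groups * fields_per_word)"
    by (simp add: algebra_simps)
  also have "\<dots> \<le> 2 * (L + 2 * lam) * min b (2 ^ L)"
    using count_groups_bound by (intro mult_le_mono2)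
  finally show ?thesis by (simp add: algebra_simps)
qed

lemma all_counts_times_w: "blocks * (count_groups * w) \<le> 2 * (36 * D + 5) * (L * n)"
proof -
  have "blocks * (count_groups * w) \<le> blocks * (2 * ((36 * D + 5) * L * b))"
    using count_groups_times_w distinct_fields_bits by (intro mult_le_mono2) simp
  also have "\<dots> = 2 * (36 * D + 5) * L * (blocks * b)"
    by (simp add: algebra_simps)
  also have "\<dots> \<le> 2 * (36 * D + 5) * L * n"
    using blocks_bound by (intro mult_le_mono2)
  finally show ?thesis by (simp add: algebra_simps)
qed

theorem layout_size_space: "layout_size n w L b lam * w \<le> (80 * D + 20) * L * n"
proof -
  define M where "M = min b ((2::nat) ^ L)"
  define f where "f = L + 2 * lam"
  define Ln where "Ln = L * n"
  define DLn where "DLn = D * (L * n)"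
  define WY where "WY = w * codes"
  define WWY where "WWY = w * w * codes"
  have "M * f \<le> w * w"
    using b_le_w field_words unfolding M_def f_def by (intro mult_le_mono) auto
  also have "\<dots> \<le> WWY"
    unfolding WWY_def codes_def by simp
  finally have small_fields: "M * f \<le> WWY" .
  have tables: "codes * b * w \<le> WWY" "2 ^ L * w \<le> WY" "w \<le> WY" "1 \<le> codes"
    using b_le_w b_min unfolding WWY_def WY_def codes_def by (auto intro!: power_increasing)
  have "2 * (w + 16) ^ 2 * codes = 2 * WWY + 64 * WY + 512 * codes"
    unfolding WWY_def WY_def by (simp add: power2_eq_square algebra_simps)
  then have codes_n: "2 * WWY + 64 * WY + 512 * codes \<le> n + 1"
    using codes_bound by linarith
  have D_L_n: "n \<le> Ln" "Ln \<le> DLn"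
    using L_pos D_pos unfolding Ln_def DLn_def by simp_all
  have "layout_size n w L b lam * w = 16 * w + 2 * (blocks * w) + 2 * (codes * b * w)
      + blocks * (count_groups * w) + count_groups * w + super_words * w + 2 ^ L * w"
    unfolding layout_size_eq by (simp add: algebra_simps)
  moreover have "2 * (36 * D + 5) * Ln = 72 * DLn + 10 * Ln"
    unfolding Ln_def DLn_def by (simp add: algebra_simps)
  moreover have "4 * (D * L * n) = 4 * DLn"
    unfolding DLn_def by simp
  ultimately have "layout_size n w L b lam * w \<le> 80 * DLn + 20 * Ln"
    using blocks_times_w count_groups_times_w[folded M_def f_def]
      all_counts_times_w[folded Ln_def] small_fields tables codes_n D_L_n
      super_words_small blocks_small by linarith
  then show ?thesis
    unfolding Ln_def DLn_def by (simp add: algebra_simps)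
qed

end

lemma (in rank_layout) length_layout_size: "length layout = layout_size n w L b lam"
  unfolding length_layout layout_size_def off_super_def off_block_def off_index_def off_local_def
    nblocks_def ncodes_def count_words_def max_distinct_def per_word_def cnt_bits_def
    nsupers_def sup_exp_def
  by (simp add: algebra_simps)

text \<open>A rank never exceeds its position, so every answer fits into a word.\<close>

lemma arank_le: "arank A k \<le> k"
proof -
  have "arank A k \<le> card {1..k}"
    unfolding arank_def by (rule card_mono) auto
  then show ?thesis by simp
qed

text \<open>The trivial structure: store every answer in its own word. It is within the space
  bound whenever a word is only O(L) bits long.\<close>

lemma direct_table:
  fixes A :: "nat \<Rightarrow> nat"
  assumes "n < 2 ^ w"
  defines "m \<equiv> 0 # map (arank A) [1..<n + 1]"
  shows "\<forall>x\<in>set m. x < 2 ^ w" and "length m = n + 1"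
    and "\<forall>k\<in>{1..n}. answers_within w m rank_prog 60 k (arank A k)"
proof -
  show "length m = n + 1"
    unfolding m_def by simp
  have "arank A k < 2 ^ w" if "k \<le> n" for k
    using arank_le[of A k] that assms(1) by linarith
  then show "\<forall>x\<in>set m. x < 2 ^ w"
    unfolding m_def by auto
  show "\<forall>k\<in>{1..n}. answers_within w m rank_prog 60 k (arank A k)"
  proof
    fix k assume k: "k \<in> {1..n}"
    then have "m ! k = arank A k"
      unfolding m_def by (cases k) (auto simp del: upt_Suc)
    moreover have "answers_within w m rank_prog 60 k (m ! k)"
      by (rule rank_prog_direct) (use k in \<open>auto simp: m_def\<close>)
    ultimately show "answers_within w m rank_prog 60 k (arank A k)"
      by simp
  qed
qed

lemma word_size_power:
  assumes "real w \<le> real D * log 2 (real n + 1)"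
  shows "2 ^ w \<le> (n + 1) ^ D"
proof -
  have "(2::real) powr (real w) \<le> 2 powr (real D * log 2 (real n + 1))"
    by (rule powr_mono) (use assms in auto)
  also have "\<dots> = (2 powr (log 2 (real n + 1))) powr real D"
    by (simp only: powr_powr mult.commute)
  also have "\<dots> = (real n + 1) ^ D"
    by (simp add: powr_realpow)
  finally have "real (2 ^ w) \<le> real ((n + 1) ^ D)"
    by (simp add: powr_realpow add.commute)
  then show ?thesis by linarith
qed

lemma symbol_bits:
  assumes "x < \<sigma>"
  shows "x < 2 ^ max 1 (nat \<lceil>log 2 (real \<sigma>)\<rceil>)"
proof -
  have "\<sigma> \<le> 2 ^ ceillog2 \<sigma>"
    by (rule le_two_power_ceillog2)
  also have "ceillog2 \<sigma> = nat \<lceil>log 2 (real \<sigma>)\<rceil>"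
    unfolding ceillog2_def using assms by simp
  also have "(2::nat) ^ nat \<lceil>log 2 (real \<sigma>)\<rceil> \<le> 2 ^ max 1 (nat \<lceil>log 2 (real \<sigma>)\<rceil>)"
    by (intro power_increasing) auto
  finally show ?thesis using assms by simp
qed

lemma arank_shift:
  fixes A :: "nat \<Rightarrow> nat"
  assumes "1 \<le> k" and "k \<le> n"
  defines "S \<equiv> \<lambda>i. if i < n then A (Suc i) else 0"
  shows "card {i. i \<le> k - 1 \<and> S i = S (k - 1)} = arank A k"
proof -
  have "{i. 1 \<le> i \<and> i \<le> k \<and> A i = A k} = Suc ` {i. i \<le> k - 1 \<and> S i = S (k - 1)}"
  proof (rule set_eqI, rule iffI)
    fix i assume "i \<in> {i. 1 \<le> i \<and> i \<le> k \<and> A i = A k}"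
    then show "i \<in> Suc ` {i. i \<le> k - 1 \<and> S i = S (k - 1)}"
      using assms(1,2) by (intro image_eqI[of _ _ "i - 1"]) (auto simp: S_def)
  next
    fix i assume "i \<in> Suc ` {i. i \<le> k - 1 \<and> S i = S (k - 1)}"
    then obtain j where j: "i = Suc j" "j \<le> k - 1" "S j = S (k - 1)" by blast
    then have "j < n" "k - 1 < n" using assms by auto
    then show "i \<in> {i. 1 \<le> i \<and> i \<le> k \<and> A i = A k}"
      using j assms(1) by (auto simp: S_def)
  qed
  then show ?thesis
    unfolding arank_def by (simp add: card_image)
qed

theorem hierarchical_structure:
  fixes A :: "nat \<Rightarrow> nat"
  assumes D: "1 \<le> D" and L: "1 \<le> L" and n_word: "n < 2 ^ w" and word: "2 ^ w \<le> (n + 1) ^ D"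
    and wide: "16 * D * L \<le> w"
    and poly_codes: "(2 * (w + 16)) ^ (6 * D) < 2 ^ w" and poly_counts: "(2 * (w + 16)) ^ 16 < 2 ^ w"
    and symbols: "\<forall>i\<in>{1..n}. A i < 2 ^ L"
  shows "\<exists>m. (\<forall>x\<in>set m. x < 2 ^ w) \<and> length m * w \<le> (80 * D + 20) * L * n
           \<and> (\<forall>k\<in>{1..n}. answers_within w m rank_prog 60 k (arank A k))"
proof -
  define b where "b = w div (2 * D * L)"
  define lam where "lam = ceillog2 w"
  define S where "S = (\<lambda>i. if i < n then A (Suc i) else 0)"
  note blocks = block_size[OF D L wide, folded b_def]
  note codes = block_code_count[OF D word blocks(4,5)]
  have L_w: "16 * L \<le> w"
    using wide D by (metis le_trans mult_le_mono2 nat_mult_1_right mult.commute)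
  then have w_min: "16 \<le> w"
    using L by linarith
  then have "0 < w"
    by simp
  note counters = counter_width[OF this poly_counts, folded lam_def]
  interpret params: block_parameters n w D L b lam
    using D L L_w blocks codes counters code_count_large[OF D poly_codes codes(2)]
    by unfold_locales auto
  have "b \<le> 2 ^ lam"
    using params.b_le_w counters(1) by linarith
  moreover have "S i < 2 ^ L" for i
    using symbols unfolding S_def by auto
  ultimately interpret layout: rank_layout n w L b lam S
    using n_word w_min L blocks(1,2) params.field_words by unfold_locales auto
  have fits: "length layout.layout \<le> n"
    using layout.length_layout_size params.layout_size_fits by simp
  have "\<forall>k\<in>{1..n}. answers_within w layout.layout rank_prog 60 k (arank A k)"
    using layout.layout_answers[OF fits] arank_shift[of _ n A] unfolding S_def by auto
  then show ?thesis
    using layout.layout_words[OF fits] layout.length_layout_size params.layout_size_space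
    by (intro exI[of _ layout.layout]) simp
qed

text \<open>Both structures together: below a threshold W0 on the word size, or when
  w < 16 D L, the direct table already has O(n L) bits; above it the hierarchical layout
  applies. The same 61-instruction program serves both, dispatching on word 0.\<close>

lemma rank_structure:
  fixes A :: "nat \<Rightarrow> nat"
  assumes W0: "16 \<le> W0"
    and poly: "\<And>w. W0 \<le> w \<Longrightarrow> (2 * (w + 16)) ^ (6 * D) < (2::nat) ^ w \<and> (2 * (w + 16)) ^ 16 < (2::nat) ^ w"
    and L: "1 \<le> L" and symbols: "\<forall>i\<in>{1..n}. A i < 2 ^ L"
    and n_word: "n < 2 ^ w" and word: "2 ^ w \<le> (n + 1) ^ D"
  shows "\<exists>m. (\<forall>x\<in>set m. x < 2 ^ w) \<and> length m * w \<le> (2 * (W0 + 16 * D) + 80 * D + 20) * n * L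
           \<and> (\<forall>k\<in>{1..n}. answers_within w m rank_prog 60 k (arank A k))"
proof -
  consider "n = 0" | "0 < n" "w < W0 \<or> w < 16 * D * L" | "W0 \<le> w" "16 * D * L \<le> w"
    by linarith
  then show ?thesis
  proof cases
    case 1
    then show ?thesis by (intro exI[of _ "[]"]) simp
  next
    case 2
    have "W0 \<le> W0 * L" and "(W0 + 16 * D) * L = W0 * L + 16 * D * L"
      using L by (simp_all add: algebra_simps)
    then have "w \<le> (W0 + 16 * D) * L"
      using 2(2) by linarith
    then have "(n + 1) * w \<le> (2 * n) * ((W0 + 16 * D) * L)"
      using 2(1) by (intro mult_le_mono) auto
    then show ?thesis
      using direct_table[OF n_word, of A]
      by (intro exI[of _ "0 # map (arank A) [1..<n + 1]"]) (auto simp: algebra_simps)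
  next
    case 3
    have "(2::nat) ^ 1 \<le> 2 ^ w"
      using 3(1) W0 by (intro power_increasing) auto
    then have "1 \<le> D"
      using word by (cases D) auto
    then obtain m where "\<forall>x\<in>set m. x < 2 ^ w" "length m * w \<le> (80 * D + 20) * L * n"
        "\<forall>k\<in>{1..n}. answers_within w m rank_prog 60 k (arank A k)"
      using hierarchical_structure[OF _ L n_word word 3(2) _ _ symbols] poly[OF 3(1)] 3(1) W0
      by auto
    then show ?thesis
      by (intro exI[of _ m]) (auto simp: algebra_simps)
  qed
qed

text \<open>The theorem: the constant C depends on D through the threshold W0 beyond which
  the polynomial bounds of block_parameters hold.\<close>

theorem lemma3:
  "\<forall>D::nat. \<exists>(C::nat) (c::nat) (P::instr list).
     \<forall>(n::nat) (\<sigma>::nat) (w::nat) (A::nat \<Rightarrow> nat).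
       (\<forall>i\<in>{1..n}. A i < \<sigma>) \<and>
       n < 2 ^ w \<and> real w \<le> real D * log 2 (real n + 1)
       \<longrightarrow> (\<exists>m::nat list.
              (\<forall>x\<in>set m. x < 2 ^ w) \<and>
              length m * w \<le> C * n * max 1 (nat \<lceil>log 2 (real \<sigma>)\<rceil>) \<and>
              (\<forall>k\<in>{1..n}. answers_within w m P c k (arank A k)))"
proof
  fix D :: nat
  obtain W1 W2 where W1: "\<And>w. W1 \<le> w \<Longrightarrow> (2 * (w + 16)) ^ (6 * D) < (2::nat) ^ w"
    and W2: "\<And>w. W2 \<le> w \<Longrightarrow> (2 * (w + 16)) ^ 16 < (2::nat) ^ w"
    using poly_below_exp by metis
  define W0 where "W0 = max 16 (max W1 W2)"
  have poly: "(2 * (w + 16)) ^ (6 * D) < (2::nat) ^ w \<and> (2 * (w + 16)) ^ 16 < (2::nat) ^ w"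
    if "W0 \<le> w" for w
    using W1 W2 that unfolding W0_def by auto
  show "\<exists>C c P. \<forall>n \<sigma> w A. (\<forall>i\<in>{1..n}. A i < \<sigma>) \<and> n < 2 ^ w
      \<and> real w \<le> real D * log 2 (real n + 1) \<longrightarrow> (\<exists>m. (\<forall>x\<in>set m. x < 2 ^ w)
      \<and> length m * w \<le> C * n * max 1 (nat \<lceil>log 2 (real \<sigma>)\<rceil>)
      \<and> (\<forall>k\<in>{1..n}. answers_within w m P c k (arank A k)))"
  proof (rule exI[of _ "2 * (W0 + 16 * D) + 80 * D + 20"], rule exI[of _ "60::nat"],
      rule exI[of _ rank_prog], intro allI impI)
    fix n \<sigma> w :: nat and A :: "nat \<Rightarrow> nat"
    assume H: "(\<forall>i\<in>{1..n}. A i < \<sigma>) \<and> n < 2 ^ w \<and> real w \<le> real D * log 2 (real n + 1)"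
    show "\<exists>m. (\<forall>x\<in>set m. x < 2 ^ w)
        \<and> length m * w \<le> (2 * (W0 + 16 * D) + 80 * D + 20) * n * max 1 (nat \<lceil>log 2 (real \<sigma>)\<rceil>)
        \<and> (\<forall>k\<in>{1..n}. answers_within w m rank_prog 60 k (arank A k))"
      using H symbol_bits word_size_power
      by (intro rank_structure[OF _ poly]) (auto simp: W0_def)
  qed
qed

end
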